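(* A triple $x=(x_1,x_2,x_3)$ of distinct points of $\partial H^n_{\mathbb{H}}$ lies in the ideal boundary of a quaternionic line ($\mathbb{H}$-line) of $H^n_{\mathbb{H}}$ if and only if $\mathbb{A}_{\mathbb{H}}(x)=\pi/2$.
   Context: $H^n_{\mathbb{H}}$ is the set of negative lines in the left $\mathbb{H}$-vector space $\mathbb{H}^{n+1}$ with Hermitian form $\langle z,w\rangle=\sum_{i=1}^n z_i\bar w_i-z_{n+1}\bar w_{n+1}$, and $\partial H^n_{\mathbb{H}}$ the set of null lines. An $\mathbb{H}$-line is a totally geodesic copy of $H^1_{\mathbb{H}}$ (projectivization of a 2-dimensional $\mathbb{H}$-subspace of signature $(1,1)$). For distinct points with lifts $\tilde x_i$, the triple product is $\langle\tilde x_1,\tilde x_2\rangle\langle\tilde x_2,\tilde x_3\rangle\langle\tilde x_3,\tilde x_1\rangle\in\mathbb{H}$, and $\mathbb{A}_{\mathbb{H}}(x)\in[0,\pi/2]$ is the angle in $\mathbb{H}\cong\mathbb{R}^4$ between $\mathbb{R}\cdot1$ and the triple product. *)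

theory Defs
  imports Complex_Main
begin

datatype quat = Quat (qre: real) (qi: real) (qj: real) (qk: real)

instantiation quat :: ab_group_add
begin
definition "0 = Quat 0 0 0 0"
definition "a + b = Quat (qre a + qre b) (qi a + qi b) (qj a + qj b) (qk a + qk b)"
definition "- a = Quat (- qre a) (- qi a) (- qj a) (- qk a)"
definition "a - b = Quat (qre a - qre b) (qi a - qi b) (qj a - qj b) (qk a - qk b)"
instance
  by standard (auto simp: zero_quat_def plus_quat_def uminus_quat_def minus_quat_def)
end

instantiation quat :: "{times, one}"
begin
definition "1 = Quat 1 0 0 0"

definition "a * b = Quat
   (qre a * qre b - qi a * qi b - qj a * qj b - qk a * qk b)
   (qre a * qi b + qi a * qre b + qj a * qk b - qk a * qj b)
   (qre a * qj b - qi a * qk b + qj a * qre b + qk a * qi b)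
   (qre a * qk b + qi a * qj b - qj a * qi b + qk a * qre b)"
instance ..
end

definition qcnj :: "quat \<Rightarrow> quat" where
  "qcnj a = Quat (qre a) (- qi a) (- qj a) (- qk a)"

definition qnorm :: "quat \<Rightarrow> real" where
  "qnorm a = sqrt ((qre a)\<^sup>2 + (qi a)\<^sup>2 + (qj a)\<^sup>2 + (qk a)\<^sup>2)"

text \<open>Angle in \<open>\<HH> \<cong> \<real>\<^sup>4\<close> between the real line \<open>\<real>\<cdot>1\<close> and a nonzero quaternion,
  a value in \<open>[0, pi/2]\<close>.\<close>
definition angle_real_line :: "quat \<Rightarrow> real" where
  "angle_real_line q = arccos (\<bar>qre q\<bar> / qnorm q)"

text \<open>Vectors of \<open>\<HH>\<^sup>n\<^sup>+\<^sup>1\<close> are functions \<open>nat \<Rightarrow> quat\<close>; only the coordinates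
  \<open>1..n+1\<close> are relevant.\<close>

definition herm :: "nat \<Rightarrow> (nat \<Rightarrow> quat) \<Rightarrow> (nat \<Rightarrow> quat) \<Rightarrow> quat" where
  "herm n z w = (\<Sum>i=1..n. z i * qcnj (w i)) - z (n+1) * qcnj (w (n+1))"

definition nonzero_vec :: "nat \<Rightarrow> (nat \<Rightarrow> quat) \<Rightarrow> bool" where
  "nonzero_vec n z \<longleftrightarrow> (\<exists>i\<in>{1..n+1}. z i \<noteq> 0)"

text \<open>\<open>z\<close> is a lift of a point of \<open>\<partial>H\<^sup>n_\<HH>\<close> (a null line).\<close>
definition null_vec :: "nat \<Rightarrow> (nat \<Rightarrow> quat) \<Rightarrow> bool" where
  "null_vec n z \<longleftrightarrow> nonzero_vec n z \<and> herm n z z = 0"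

definition same_line :: "nat \<Rightarrow> (nat \<Rightarrow> quat) \<Rightarrow> (nat \<Rightarrow> quat) \<Rightarrow> bool" where
  "same_line n z w \<longleftrightarrow> (\<exists>c. \<forall>i\<in>{1..n+1}. z i = c * w i)"

definition in_lspan :: "nat \<Rightarrow> (nat \<Rightarrow> quat) \<Rightarrow> (nat \<Rightarrow> quat) \<Rightarrow> (nat \<Rightarrow> quat) \<Rightarrow> bool" where
  "in_lspan n u v z \<longleftrightarrow> (\<exists>a b. \<forall>i\<in>{1..n+1}. z i = a * u i + b * v i)"

text \<open>\<open>u, v\<close> is an orthonormal basis of signature (1,1) of a 2-dimensional
  \<HH>-subspace; the \<HH>-lines of \<open>H\<^sup>n_\<HH>\<close> are exactly the projectivizations of the spans of
  such pairs, and the ideal boundary of that \<HH>-line consists of the null lines in the span.\<close>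
definition hline_basis :: "nat \<Rightarrow> (nat \<Rightarrow> quat) \<Rightarrow> (nat \<Rightarrow> quat) \<Rightarrow> bool" where
  "hline_basis n u v \<longleftrightarrow> herm n u u = 1 \<and> herm n v v = - 1 \<and> herm n u v = 0"

definition triple_product :: "nat \<Rightarrow> (nat \<Rightarrow> quat) \<Rightarrow> (nat \<Rightarrow> quat) \<Rightarrow> (nat \<Rightarrow> quat) \<Rightarrow> quat" where
  "triple_product n x1 x2 x3 = herm n x1 x2 * herm n x2 x3 * herm n x3 x1"

definition quat_angular_inv :: "nat \<Rightarrow> (nat \<Rightarrow> quat) \<Rightarrow> (nat \<Rightarrow> quat) \<Rightarrow> (nat \<Rightarrow> quat) \<Rightarrow> real" where
  "quat_angular_inv n x1 x2 x3 = angle_real_line (triple_product n x1 x2 x3)"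

end

theory Submission
  imports Defs
begin

text \<open>For null lifts with \<open>h = \<langle>x1,x2\<rangle> \<noteq> 0\<close>, the vector
  \<open>w = |h|\<^sup>2 x3 - \<langle>x3,x2\<rangle>\<langle>x2,x1\<rangle> x1 - \<langle>x3,x1\<rangle>\<langle>x1,x2\<rangle> x2\<close> is orthogonal to \<open>x1\<close> and
  \<open>x2\<close>, and \<open>Re \<langle>w,w\<rangle> = -2 |h|\<^sup>2 Re \<langle>x1,x2\<rangle>\<langle>x2,x3\<rangle>\<langle>x3,x1\<rangle>\<close>; the angular invariant is
  \<open>pi/2\<close> exactly when this real part vanishes, i.e. when \<open>w\<close> is null.
  If the \<open>x\<^sub>i\<close> lie on an \<HH>-line, which has signature \<open>(1,1)\<close>, then so does \<open>w\<close>, and being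
  orthogonal to the null vector \<open>x1\<close> it is null. Conversely, in signature \<open>(n,1)\<close> a null
  vector orthogonal to \<open>x1\<close> is a multiple of \<open>x1\<close>; as \<open>\<langle>w,x2\<rangle> = 0\<close> but \<open>\<langle>x1,x2\<rangle> \<noteq> 0\<close>,
  \<open>w = 0\<close>, so \<open>x3\<close> lies in the span of \<open>x1, x2\<close>, which is an \<HH>-line.\<close>

section \<open>Quaternions as a real division algebra\<close>

lemma quat_eq_iff: "a = b \<longleftrightarrow> qre a = qre b \<and> qi a = qi b \<and> qj a = qj b \<and> qk a = qk b"
  by (cases a; cases b) auto

lemma quat_components [simp]:
  "qre 0 = 0" "qi 0 = 0" "qj 0 = 0" "qk 0 = 0"
  "qre 1 = 1" "qi 1 = 0" "qj 1 = 0" "qk 1 = 0"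
  "qre (a + b) = qre a + qre b" "qi (a + b) = qi a + qi b"
  "qj (a + b) = qj a + qj b" "qk (a + b) = qk a + qk b"
  "qre (a - b) = qre a - qre b" "qi (a - b) = qi a - qi b"
  "qj (a - b) = qj a - qj b" "qk (a - b) = qk a - qk b"
  "qre (- a) = - qre a" "qi (- a) = - qi a" "qj (- a) = - qj a" "qk (- a) = - qk a"
  "qre (a * b) = qre a * qre b - qi a * qi b - qj a * qj b - qk a * qk b"
  "qi (a * b) = qre a * qi b + qi a * qre b + qj a * qk b - qk a * qj b"
  "qj (a * b) = qre a * qj b - qi a * qk b + qj a * qre b + qk a * qi b"
  "qk (a * b) = qre a * qk b + qi a * qj b - qj a * qi b + qk a * qre b"
  by (simp_all add: zero_quat_def one_quat_def plus_quat_def minus_quat_def uminus_quat_def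
      times_quat_def)

lemma qcnj_components [simp]:
  "qre (qcnj a) = qre a" "qi (qcnj a) = - qi a" "qj (qcnj a) = - qj a" "qk (qcnj a) = - qk a"
  by (simp_all add: qcnj_def)

lemma qnorm_sq: "(qnorm a)\<^sup>2 = (qre a)\<^sup>2 + (qi a)\<^sup>2 + (qj a)\<^sup>2 + (qk a)\<^sup>2"
  by (simp add: qnorm_def)

lemma qnorm_eq_0_iff [simp]: "qnorm a = 0 \<longleftrightarrow> a = 0"
  by (auto simp: qnorm_def quat_eq_iff add_nonneg_eq_0_iff)

lemma qnorm_0 [simp]: "qnorm 0 = 0"
  by simp

instantiation quat :: "{scaleR, inverse}"
begin
definition scaleR_quat :: "real \<Rightarrow> quat \<Rightarrow> quat" where
  "r *\<^sub>R a = Quat (r * qre a) (r * qi a) (r * qj a) (r * qk a)"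
definition inverse_quat :: "quat \<Rightarrow> quat" where
  "inverse a = (1 / (qnorm a)\<^sup>2) *\<^sub>R qcnj a"
definition divide_quat :: "quat \<Rightarrow> quat \<Rightarrow> quat" where
  "divide_quat a b = a * inverse b"
instance ..
end

lemma quat_scaleR_components [simp]:
  "qre (r *\<^sub>R a) = r * qre a" "qi (r *\<^sub>R a) = r * qi a"
  "qj (r *\<^sub>R a) = r * qj a" "qk (r *\<^sub>R a) = r * qk a"
  by (simp_all add: scaleR_quat_def)

instance quat :: real_div_algebra
proof
  fix a b c :: quat and r s :: real
  show "a * b * c = a * (b * c)" "(a + b) * c = a * c + b * c" "a * (b + c) = a * b + a * c"
    "1 * a = a" "a * 1 = a" "r *\<^sub>R (a + b) = r *\<^sub>R a + r *\<^sub>R b" "(r + s) *\<^sub>R a = r *\<^sub>R a + s *\<^sub>R a"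
    "r *\<^sub>R s *\<^sub>R a = (r * s) *\<^sub>R a" "1 *\<^sub>R a = a" "r *\<^sub>R a * b = r *\<^sub>R (a * b)"
    "a * r *\<^sub>R b = r *\<^sub>R (a * b)" "a / b = a * inverse b" "inverse 0 = (0 :: quat)"
    by (simp_all add: quat_eq_iff algebra_simps divide_quat_def inverse_quat_def)
  show "(0 :: quat) \<noteq> 1"
    by (simp add: quat_eq_iff)
  assume "a \<noteq> 0"
  then have "(qre a)\<^sup>2 + (qi a)\<^sup>2 + (qj a)\<^sup>2 + (qk a)\<^sup>2 \<noteq> 0"
    by (simp flip: qnorm_sq)
  then show "inverse a * a = 1" "a * inverse a = 1"
    unfolding inverse_quat_def qnorm_sq
    by (simp_all add: quat_eq_iff power2_eq_square algebra_simps flip: add_divide_distrib)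
qed

lemma of_real_quat_components [simp]:
  "qre (of_real r) = r" "qi (of_real r) = 0" "qj (of_real r) = 0" "qk (of_real r) = 0"
  by (simp_all add: of_real_def)

lemma of_real_mult_commute: "of_real r * x = x * (of_real r :: 'a :: real_algebra_1)"
  by (simp add: of_real_def)

lemma qcnj_add [simp]: "qcnj (a + b) = qcnj a + qcnj b"
  and qcnj_diff [simp]: "qcnj (a - b) = qcnj a - qcnj b"
  and qcnj_mult [simp]: "qcnj (a * b) = qcnj b * qcnj a"
  and qcnj_qcnj [simp]: "qcnj (qcnj a) = a"
  and qcnj_of_real [simp]: "qcnj (of_real r) = of_real r"
  by (simp_all add: quat_eq_iff algebra_simps)

lemma qcnj_0 [simp]: "qcnj 0 = 0"
  by (simp add: quat_eq_iff)

lemma qcnj_sum: "qcnj (sum f A) = (\<Sum>i\<in>A. qcnj (f i))"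
  by (induct A rule: infinite_finite_induct) simp_all

lemma qre_sum: "qre (sum f A) = (\<Sum>i\<in>A. qre (f i))"
  by (induct A rule: infinite_finite_induct) simp_all

lemma mult_qcnj_self: "a * qcnj a = of_real ((qnorm a)\<^sup>2)"
  and qcnj_mult_self: "qcnj a * a = of_real ((qnorm a)\<^sup>2)"
  unfolding qnorm_sq by (simp_all add: quat_eq_iff power2_eq_square algebra_simps)

lemma qnorm_mult: "qnorm (a * b) = qnorm a * qnorm b"
  unfolding qnorm_def real_sqrt_mult[symmetric] quat_components
  by (rule arg_cong[where f = sqrt]) algebra

lemma qre_mult_commute: "qre (a * b) = qre (b * a)"
  by (simp add: algebra_simps)

lemma qcnj_eq_self_imp_real: "qcnj a = a \<Longrightarrow> a = of_real (qre a)"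
  by (auto simp: quat_eq_iff)

lemma qnorm_nonneg: "qnorm a \<ge> 0"
  by (simp add: qnorm_def)

lemma qnorm_qcnj [simp]: "qnorm (qcnj a) = qnorm a"
  by (simp add: qnorm_def)

lemma angle_real_line_eq_pi_half_iff: "angle_real_line q = pi / 2 \<longleftrightarrow> qre q = 0"
proof (cases "q = 0")
  case False
  then have pos: "qnorm q > 0"
    using qnorm_nonneg[of q] by (simp add: less_le)
  have "\<bar>qre q\<bar> \<le> qnorm q"
    unfolding qnorm_def by (rule real_le_rsqrt) (simp add: power2_abs)
  then have "\<bar>\<bar>qre q\<bar> / qnorm q\<bar> \<le> 1"
    using pos by simp
  then have "angle_real_line q = arccos 0 \<longleftrightarrow> \<bar>qre q\<bar> / qnorm q = 0"
    unfolding angle_real_line_def by (intro arccos_eq_iff) simp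
  then show ?thesis
    using pos False by simp
qed (simp add: angle_real_line_def)

lemma mult_qcnj_self_eq_iff: "a * qcnj a = b * qcnj b \<longleftrightarrow> qnorm a = qnorm b"
  by (metis mult_qcnj_self of_real_eq_iff power2_eq_iff_nonneg qnorm_nonneg)

lemma qnorm_eq_if_mult_qcnj_eq:
  assumes "qnorm a = qnorm b" "a \<noteq> 0" "c * qcnj a = d * qcnj b"
  shows "qnorm c = qnorm d"
proof -
  have "qnorm c * qnorm a = qnorm d * qnorm a"
    using arg_cong[OF assms(3), of qnorm] assms(1) by (simp add: qnorm_mult)
  then show ?thesis
    using assms(2) by simp
qed

section \<open>The Hermitian form of signature \<open>(n,1)\<close>\<close>

lemma herm_add_left [simp]: "herm n (\<lambda>i. z i + w i) y = herm n z y + herm n w y"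
  and herm_diff_left [simp]: "herm n (\<lambda>i. z i - w i) y = herm n z y - herm n w y"
  and herm_scale_left [simp]: "herm n (\<lambda>i. a * z i) y = a * herm n z y"
  unfolding herm_def by (simp_all add: algebra_simps sum.distrib sum_subtractf sum_distrib_left)

lemma herm_swap: "herm n w z = qcnj (herm n z w)"
  unfolding herm_def by (simp add: qcnj_sum)

lemma herm_add_right [simp]: "herm n y (\<lambda>i. z i + w i) = herm n y z + herm n y w"
  by (metis herm_swap herm_add_left qcnj_add)

lemma herm_diff_right [simp]: "herm n y (\<lambda>i. z i - w i) = herm n y z - herm n y w"
  by (metis herm_swap herm_diff_left qcnj_diff)

lemma herm_scale_right [simp]: "herm n y (\<lambda>i. a * z i) = herm n y z * qcnj a"
  by (metis herm_swap herm_scale_left qcnj_mult)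

lemma herm_cong:
  "(\<And>i. i \<in> {1..n+1} \<Longrightarrow> z i = z' i) \<Longrightarrow> (\<And>i. i \<in> {1..n+1} \<Longrightarrow> w i = w' i) \<Longrightarrow>
    herm n z w = herm n z' w'"
  unfolding herm_def by (auto intro!: sum.cong arg_cong2[where f = "(-)"])

lemma herm_self_real: "herm n z z = of_real (qre (herm n z z))"
  by (rule qcnj_eq_self_imp_real) (simp flip: herm_swap)

lemma qre_herm_self: "qre (herm n z z) = (\<Sum>i=1..n. (qnorm (z i))\<^sup>2) - (qnorm (z (n+1)))\<^sup>2"
  unfolding herm_def by (simp add: qre_sum mult_qcnj_self del: of_real_power)

lemma isotropic_with_last_coord_0_vanishes:
  assumes "z (n+1) = 0" "herm n z z = 0" "i \<in> {1..n+1}"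
  shows "z i = 0"
proof -
  have "(\<Sum>j=1..n. (qnorm (z j))\<^sup>2) = 0"
    using qre_herm_self[of n z] assms(1,2) by (simp add: qnorm_def)
  then have "\<forall>j\<in>{1..n}. qnorm (z j) = 0"
    by (simp add: sum_nonneg_eq_0_iff)
  then show ?thesis
    using assms(1,3) by (cases "i = n+1") auto
qed

lemma null_vec_last_coord_nonzero:
  assumes "null_vec n x"
  shows "x (n+1) \<noteq> 0"
  using assms isotropic_with_last_coord_0_vanishes[of x n]
  by (auto simp: null_vec_def nonzero_vec_def)

text \<open>Subtracting the multiple of \<open>x\<close> with the same last coordinate leaves a null vector
  in the hyperplane \<open>z\<^sub>n\<^sub>+\<^sub>1 = 0\<close>, on which the form is positive definite.\<close>
lemma null_orth_null_imp_multiple: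
  assumes "null_vec n x" "herm n w x = 0" "herm n w w = 0"
  shows "\<exists>l. \<forall>i\<in>{1..n+1}. w i = l * x i"
proof -
  define l where "l = w (n+1) * inverse (x (n+1))"
  have "herm n x w = 0" "herm n x x = 0"
    using assms herm_swap[of n x w] by (simp_all add: null_vec_def)
  then have "herm n (\<lambda>i. w i - l * x i) (\<lambda>i. w i - l * x i) = 0"
    using assms(2,3) by simp
  moreover have "w (n+1) - l * x (n+1) = 0"
    using null_vec_last_coord_nonzero[OF assms(1)] by (simp add: l_def mult.assoc)
  ultimately show ?thesis
    using isotropic_with_last_coord_0_vanishes[of "\<lambda>i. w i - l * x i" n] by auto
qed

lemma herm_ne_0_if_not_same_line:
  assumes "null_vec n x" "null_vec n y" "\<not> same_line n x y"
  shows "herm n x y \<noteq> 0"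
proof
  assume "herm n x y = 0"
  then obtain l where l: "\<forall>i\<in>{1..n+1}. y i = l * x i"
    using null_orth_null_imp_multiple[OF assms(1)] assms(2) herm_swap[of n y x]
    by (auto simp: null_vec_def)
  have "l \<noteq> 0"
    using l assms(2) by (auto simp: null_vec_def nonzero_vec_def)
  then have "\<forall>i\<in>{1..n+1}. x i = inverse l * y i"
    using l by (simp add: mult.assoc[symmetric])
  then show False
    using assms(3) by (auto simp: same_line_def)
qed

section \<open>Quaternionic lines\<close>

lemma in_lspan_scale:
  assumes "in_lspan n u v x"
  shows "in_lspan n u v (\<lambda>i. c * x i)"
proof -
  obtain a b where "\<forall>i\<in>{1..n+1}. x i = a * u i + b * v i"
    using assms unfolding in_lspan_def by blast
  then have "\<forall>i\<in>{1..n+1}. c * x i = (c * a) * u i + (c * b) * v i"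
    by (simp add: distrib_left mult.assoc)
  then show ?thesis
    unfolding in_lspan_def by blast
qed

lemma in_lspan_diff:
  assumes "in_lspan n u v x" "in_lspan n u v y"
  shows "in_lspan n u v (\<lambda>i. x i - y i)"
proof -
  obtain a b c d where
    "\<forall>i\<in>{1..n+1}. x i = a * u i + b * v i" "\<forall>i\<in>{1..n+1}. y i = c * u i + d * v i"
    using assms unfolding in_lspan_def by blast
  then have "\<forall>i\<in>{1..n+1}. x i - y i = (a - c) * u i + (b - d) * v i"
    by (simp add: algebra_simps)
  then show ?thesis
    unfolding in_lspan_def by blast
qed

lemma in_lspan_trans:
  assumes "in_lspan n u v x" "in_lspan n u v y" "in_lspan n x y z"
  shows "in_lspan n u v z"
proof -
  obtain a b c d e f where
    "\<forall>i\<in>{1..n+1}. x i = a * u i + b * v i" "\<forall>i\<in>{1..n+1}. y i = c * u i + d * v i"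
    "\<forall>i\<in>{1..n+1}. z i = e * x i + f * y i"
    using assms unfolding in_lspan_def by blast
  then have "\<forall>i\<in>{1..n+1}. z i = (e * a + f * c) * u i + (e * b + f * d) * v i"
    by (simp add: algebra_simps)
  then show ?thesis
    unfolding in_lspan_def by blast
qed

lemma herm_hline_coeffs:
  assumes "hline_basis n u v"
    and "\<forall>i\<in>{1..n+1}. x i = a * u i + b * v i" "\<forall>i\<in>{1..n+1}. y i = c * u i + d * v i"
  shows "herm n x y = a * qcnj c - b * qcnj d"
proof -
  have "herm n x y = herm n (\<lambda>i. a * u i + b * v i) (\<lambda>i. c * u i + d * v i)"
    using assms(2,3) by (intro herm_cong) auto
  then show ?thesis
    using assms(1) herm_swap[of n v u] by (simp add: hline_basis_def)
qed

text \<open>The coefficients of a null vector in an orthonormal basis of signature \<open>(1,1)\<close> satisfy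
  \<open>|a| = |b| \<noteq> 0\<close>, and orthogonality \<open>c a\<^sup>* = d b\<^sup>*\<close> then forces \<open>|c| = |d|\<close>.\<close>
lemma null_if_orth_null_in_hline:
  assumes "hline_basis n u v" "in_lspan n u v x" "in_lspan n u v w"
    and "null_vec n x" "herm n w x = 0"
  shows "herm n w w = 0"
proof -
  obtain a b c d where
    x: "\<forall>i\<in>{1..n+1}. x i = a * u i + b * v i" and w: "\<forall>i\<in>{1..n+1}. w i = c * u i + d * v i"
    using assms(2,3) unfolding in_lspan_def by blast
  have ab: "qnorm a = qnorm b"
    using herm_hline_coeffs[OF assms(1) x x] assms(4)
    by (simp add: null_vec_def flip: mult_qcnj_self_eq_iff)
  have "a \<noteq> 0"
  proof
    assume "a = 0"
    then have "b = 0"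
      using ab by simp
    then show False
      using \<open>a = 0\<close> x assms(4) by (auto simp: null_vec_def nonzero_vec_def)
  qed
  moreover have "c * qcnj a = d * qcnj b"
    using herm_hline_coeffs[OF assms(1) w x] assms(5) by simp
  ultimately have "qnorm c = qnorm d"
    using ab qnorm_eq_if_mult_qcnj_eq by blast
  then show ?thesis
    using herm_hline_coeffs[OF assms(1) w w] by (simp add: mult_qcnj_self_eq_iff)
qed

lemma half_add_half: "1/2 + 1/2 = (1 :: 'a :: real_div_algebra)"
  using of_real_add[of "1/2" "1/2", where 'a = 'a] by simp

lemma hline_basis_sum_diff:
  assumes "herm n x1 x1 = 0" "herm n x2 x2 = 0"
    and "herm n x1 x2 * qcnj c = 1/2" "c * herm n x2 x1 = 1/2"
  shows "hline_basis n (\<lambda>i. x1 i + c * x2 i) (\<lambda>i. x1 i - c * x2 i)"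
proof -
  let ?u = "\<lambda>i. x1 i + c * x2 i" and ?v = "\<lambda>i. x1 i - c * x2 i"
  have "herm n ?u ?u = herm n x1 x2 * qcnj c + c * herm n x2 x1"
    "herm n ?v ?v = - (herm n x1 x2 * qcnj c) - c * herm n x2 x1"
    "herm n ?u ?v = c * herm n x2 x1 - herm n x1 x2 * qcnj c"
    using assms(1,2) by (simp_all add: algebra_simps)
  moreover have "- (1/2) - 1/2 = (-1 :: quat)"
    using half_add_half[where 'a = quat] by (metis minus_add_distrib diff_conv_add_uminus)
  ultimately show ?thesis
    by (simp only: hline_basis_def assms(3,4) half_add_half diff_self)
qed

lemma in_lspan_sum_diff:
  assumes "c \<noteq> 0"
  shows "in_lspan n (\<lambda>i. x i + c * y i) (\<lambda>i. x i - c * y i) x"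
    and "in_lspan n (\<lambda>i. x i + c * y i) (\<lambda>i. x i - c * y i) y"
proof -
  have "1/2 * (x i + c * y i) + 1/2 * (x i - c * y i) = (1/2 + 1/2) * x i" for i
    by (simp add: algebra_simps)
  then show "in_lspan n (\<lambda>i. x i + c * y i) (\<lambda>i. x i - c * y i) x"
    unfolding in_lspan_def half_add_half by (metis mult_1)
  define d where "d = 1/2 * inverse c"
  have "d * (x i + c * y i) + (- d) * (x i - c * y i) = (d * c + d * c) * y i" for i
    by (simp add: algebra_simps)
  moreover have "d * c + d * c = 1"
    using assms half_add_half by (simp add: d_def mult.assoc)
  ultimately show "in_lspan n (\<lambda>i. x i + c * y i) (\<lambda>i. x i - c * y i) y"
    unfolding in_lspan_def by (metis mult_1)
qed

lemma hline_through_nonorth_null_pair: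
  assumes "herm n x1 x1 = 0" "herm n x2 x2 = 0" "herm n x1 x2 \<noteq> 0"
  shows "\<exists>u v. hline_basis n u v \<and> in_lspan n u v x1 \<and> in_lspan n u v x2"
proof -
  define h where "h = herm n x1 x2"
  define r where "r = inverse (2 * (qnorm h)\<^sup>2)"
  define c where "c = of_real r * h"
  have half: "(qnorm h)\<^sup>2 * r = 1/2" "r * (qnorm h)\<^sup>2 = 1/2"
    using assms(3) by (simp_all add: h_def r_def)
  have "h * qcnj c = of_real ((qnorm h)\<^sup>2 * r)"
    by (simp only: c_def qcnj_mult qcnj_of_real mult.assoc[symmetric] mult_qcnj_self of_real_mult)
  then have hc: "h * qcnj c = 1/2"
    by (simp only: half) simp
  have "c * qcnj h = of_real (r * (qnorm h)\<^sup>2)"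
    by (simp only: c_def mult.assoc mult_qcnj_self of_real_mult)
  then have "c * qcnj h = 1/2"
    by (simp only: half) simp
  then have ch: "c * herm n x2 x1 = 1/2"
    by (simp add: h_def flip: herm_swap)
  have "c \<noteq> 0"
    using ch by auto
  then show ?thesis
    using hline_basis_sum_diff[OF assms(1,2) hc[unfolded h_def] ch] in_lspan_sum_diff by blast
qed

section \<open>Null triples and the triple product\<close>

text \<open>For null \<open>x1, x2\<close> this is \<open>|\<langle>x1,x2\<rangle>|\<^sup>2\<close> times the component of \<open>x3\<close> orthogonal to
  the span of \<open>x1, x2\<close>.\<close>
definition orth_residual ::
  "nat \<Rightarrow> (nat \<Rightarrow> quat) \<Rightarrow> (nat \<Rightarrow> quat) \<Rightarrow> (nat \<Rightarrow> quat) \<Rightarrow> nat \<Rightarrow> quat" where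
  "orth_residual n x1 x2 x3 = (\<lambda>i. of_real ((qnorm (herm n x1 x2))\<^sup>2) * x3 i
     - herm n x3 x2 * herm n x2 x1 * x1 i - herm n x3 x1 * herm n x1 x2 * x2 i)"

lemma in_lspan_orth_residual:
  "in_lspan n u v x1 \<Longrightarrow> in_lspan n u v x2 \<Longrightarrow> in_lspan n u v x3 \<Longrightarrow>
    in_lspan n u v (orth_residual n x1 x2 x3)"
  unfolding orth_residual_def by (intro in_lspan_diff in_lspan_scale)

lemma herm_orth_residual_left1:
  assumes "herm n x1 x1 = 0"
  shows "herm n (orth_residual n x1 x2 x3) x1 = 0"
proof -
  have "herm n x2 x1 = qcnj (herm n x1 x2)"
    by (rule herm_swap)
  then show ?thesis
    using assms of_real_mult_commute[of _ "herm n x3 x1"]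
    by (simp add: orth_residual_def mult.assoc mult_qcnj_self del: of_real_power)
qed

lemma herm_orth_residual_left2:
  assumes "herm n x2 x2 = 0"
  shows "herm n (orth_residual n x1 x2 x3) x2 = 0"
proof -
  have "herm n x2 x1 = qcnj (herm n x1 x2)"
    by (rule herm_swap)
  then show ?thesis
    using assms of_real_mult_commute[of _ "herm n x3 x2"]
    by (simp add: orth_residual_def mult.assoc qcnj_mult_self del: of_real_power)
qed

lemma qre_herm_orth_residual:
  assumes "herm n x1 x1 = 0" "herm n x2 x2 = 0" "herm n x3 x3 = 0"
  shows "qre (herm n (orth_residual n x1 x2 x3) (orth_residual n x1 x2 x3))
    = - 2 * (qnorm (herm n x1 x2))\<^sup>2 * qre (triple_product n x1 x2 x3)"
proof -
  define w where "w = orth_residual n x1 x2 x3"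
  define N where "N = (qnorm (herm n x1 x2))\<^sup>2"
  have "herm n w x1 = 0" "herm n w x2 = 0"
    unfolding w_def using herm_orth_residual_left1 herm_orth_residual_left2 assms(1,2) by blast+
  then have "herm n w w = herm n w x3 * of_real N"
    by (subst (2) w_def) (simp add: orth_residual_def N_def del: of_real_power)
  moreover have "herm n w x3 = - (herm n x3 x2 * herm n x2 x1 * herm n x1 x3)
      - herm n x3 x1 * herm n x1 x2 * herm n x2 x3"
    using assms(3) by (simp add: w_def orth_residual_def)
  moreover have rotated:
    "qre (herm n x3 x1 * herm n x1 x2 * herm n x2 x3) = qre (triple_product n x1 x2 x3)"
    unfolding triple_product_def by (metis qre_mult_commute mult.assoc)
  moreover have "herm n x3 x2 * herm n x2 x1 * herm n x1 x3
      = qcnj (herm n x3 x1 * herm n x1 x2 * herm n x2 x3)"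
    by (simp add: mult.assoc flip: herm_swap)
  then have "qre (herm n x3 x2 * herm n x2 x1 * herm n x1 x3) = qre (triple_product n x1 x2 x3)"
    using rotated by (metis qcnj_components(1))
  ultimately show ?thesis
    unfolding w_def[symmetric] N_def[symmetric] by simp
qed

lemma in_lspan_if_orth_residual_eq_0:
  assumes "herm n x1 x2 \<noteq> 0" "\<forall>i\<in>{1..n+1}. orth_residual n x1 x2 x3 i = 0"
  shows "in_lspan n x1 x2 x3"
proof -
  define N where "N = (of_real ((qnorm (herm n x1 x2))\<^sup>2) :: quat)"
  define p where "p = herm n x3 x2 * herm n x2 x1"
  define q where "q = herm n x3 x1 * herm n x1 x2"
  have "N \<noteq> 0"
    using assms(1) by (simp add: N_def)
  have "x3 i = (inverse N * p) * x1 i + (inverse N * q) * x2 i" if "i \<in> {1..n+1}" for i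
  proof -
    have "N * x3 i = p * x1 i + q * x2 i"
      using assms(2) that
      by (simp add: orth_residual_def N_def p_def q_def diff_eq_eq add.commute del: of_real_power)
    then have "inverse N * (N * x3 i) = inverse N * (p * x1 i + q * x2 i)"
      by simp
    then show ?thesis
      using \<open>N \<noteq> 0\<close> by (simp add: distrib_left mult.assoc[symmetric])
  qed
  then show ?thesis
    unfolding in_lspan_def by blast
qed

lemma qre_triple_product_eq_0_if_in_hline:
  assumes "null_vec n x1" "null_vec n x2" "null_vec n x3" "\<not> same_line n x1 x2"
    and "hline_basis n u v" "in_lspan n u v x1" "in_lspan n u v x2" "in_lspan n u v x3"
  shows "qre (triple_product n x1 x2 x3) = 0"
proof -
  let ?w = "orth_residual n x1 x2 x3"
  have null: "herm n x1 x1 = 0" "herm n x2 x2 = 0" "herm n x3 x3 = 0"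
    using assms(1-3) by (simp_all add: null_vec_def)
  have "in_lspan n u v ?w"
    using assms(6-8) by (rule in_lspan_orth_residual)
  then have "herm n ?w ?w = 0"
    using null_if_orth_null_in_hline assms(1,5,6) herm_orth_residual_left1[OF null(1)] by blast
  moreover have "herm n x1 x2 \<noteq> 0"
    using assms(1,2,4) by (rule herm_ne_0_if_not_same_line)
  ultimately show ?thesis
    using qre_herm_orth_residual[OF null] by simp
qed

lemma hline_through_if_qre_triple_product_eq_0:
  assumes "null_vec n x1" "null_vec n x2" "null_vec n x3" "\<not> same_line n x1 x2"
    and "qre (triple_product n x1 x2 x3) = 0"
  shows "\<exists>u v. hline_basis n u v \<and> in_lspan n u v x1 \<and> in_lspan n u v x2 \<and> in_lspan n u v x3"
proof -
  let ?w = "orth_residual n x1 x2 x3"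
  have null: "herm n x1 x1 = 0" "herm n x2 x2 = 0" "herm n x3 x3 = 0"
    using assms(1-3) by (simp_all add: null_vec_def)
  have h: "herm n x1 x2 \<noteq> 0"
    using assms(1,2,4) by (rule herm_ne_0_if_not_same_line)
  have "herm n ?w ?w = 0"
    using herm_self_real[of n ?w] qre_herm_orth_residual[OF null] assms(5) by simp
  then obtain l where l: "\<forall>i\<in>{1..n+1}. ?w i = l * x1 i"
    using null_orth_null_imp_multiple assms(1) herm_orth_residual_left1[OF null(1)] by blast
  have "herm n ?w x2 = herm n (\<lambda>i. l * x1 i) x2"
    using l by (intro herm_cong) auto
  then have "l = 0"
    using herm_orth_residual_left2[OF null(2)] h by simp
  then have "in_lspan n x1 x2 x3"
    using in_lspan_if_orth_residual_eq_0[OF h] l by simp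
  moreover obtain u v where "hline_basis n u v" "in_lspan n u v x1" "in_lspan n u v x2"
    using hline_through_nonorth_null_pair null(1,2) h by blast
  ultimately show ?thesis
    using in_lspan_trans by blast
qed

theorem theorem3p6:
  fixes n :: nat and x1 x2 x3 :: "nat \<Rightarrow> quat"
  assumes "n \<ge> 1"
    and "null_vec n x1" "null_vec n x2" "null_vec n x3"
    and "\<not> same_line n x1 x2" "\<not> same_line n x2 x3" "\<not> same_line n x1 x3"
  shows "(\<exists>u v. hline_basis n u v \<and> in_lspan n u v x1 \<and> in_lspan n u v x2 \<and> in_lspan n u v x3)
     \<longleftrightarrow> quat_angular_inv n x1 x2 x3 = pi / 2"
  \<comment> \<open>Only \<open>x1 \<noteq> x2\<close> is needed: if \<open>x3\<close> is on the line of \<open>x1\<close> or \<open>x2\<close>, the triple product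
    vanishes and \<open>x3\<close> lies on the \<HH>-line through \<open>x1, x2\<close>.\<close>
  unfolding quat_angular_inv_def angle_real_line_eq_pi_half_iff
  using qre_triple_product_eq_0_if_in_hline[OF assms(2-5)]
    hline_through_if_qre_triple_product_eq_0[OF assms(2-5)]
  by blast

end
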